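(* Let $n\ge 2$ and let $\sigma_{n-1}=c_{n-1}-\lfloor\frac{n-1}{2}\rfloor$, where $c_{n-1}=\binom{n-1}{2}$. As elements of $R/J_n$: if $n$ is even, then $x_{nn}^{\sigma_{n-1}}\,p^+_{n}=p_n$; if $n$ is odd, then for every $i\in[n]$, $x_{nn}^{\sigma_{n-1}+1}\,p^+_{n,i}=x_{in}\,p_n$.
   Context: Let $\mathbbm{k}$ be a field, $[n]=\{1,\dots,n\}$, $R=\mathbbm{k}[x_{ij}:1\le i\le j\le n]$ with $x_{ij}=x_{ji}$; exponent vectors in $\mathbb{N}^{\binom{n+1}{2}}$ with basis $e_{ij}=e_{ji}$. $V_n$ is the $n\times\binom{n+1}{2}$ matrix whose column indexed by $jk$ is $e_j+e_k\in\mathbb{Z}^n$; for $\mathbf b\in\mathbb{N}^n$, $V_n^{-1}[\mathbf b]=\{u\in\mathbb{N}^{\binom{n+1}{2}}:V_nu=\mathbf b\}$. $J_n$ is generated by the principal $2$-minors $x_{ii}x_{jj}-x_{ij}^2$. With $[ij|kl]:=e_{ik}+e_{jl}-e_{il}-e_{jk}$, $L'_n$ is the lattice generated by the $[ij|ij]$; two points of a fiber are equivalent if their difference lies in $L'_n$ (equivalent monomials are equal in $R/J_n$). Define $p_n=\prod_{1\le i<j\le n-1}(x_{ij}x_{nn}+x_{in}x_{jn})$. If $n$ is odd, $p^+_{n,i}\in R/J_n$ is the sum of $x^{\mathbf a}$ over the equivalence classes $\mathbf a$ of $V_n^{-1}[(n-2,\dots,n-2)+e_i]$ modulo $L'_n$;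 if $n$ is even, $p^+_n\in R/J_n$ is the sum of $x^{\mathbf a}$ over the equivalence classes of $V_n^{-1}[(n-2,\dots,n-2)]$ modulo $L'_n$. *)

theory Defs
  imports Main "HOL-Library.Poly_Mapping"
begin

text \<open>Variables x_ij (i \<le> j) are indexed by ordered pairs (i,j) with 1 \<le> i \<le> j \<le> n.\<close>

type_synonym expvec = "(nat \<times> nat) \<Rightarrow>\<^sub>0 nat"
type_synonym 'k mpoly = "expvec \<Rightarrow>\<^sub>0 'k"

definition Pairs :: "nat \<Rightarrow> (nat \<times> nat) set" where
  "Pairs n = {(i,j). 1 \<le> i \<and> i \<le> j \<and> j \<le> n}"

definition OffPairs :: "nat \<Rightarrow> (nat \<times> nat) set" where
  "OffPairs n = {(i,j). 1 \<le> i \<and> i < j \<and> j \<le> n}"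

definition xmon :: "expvec \<Rightarrow> 'k::comm_ring_1 mpoly" where
  "xmon a = Poly_Mapping.single a 1"

definition xvar :: "nat \<Rightarrow> nat \<Rightarrow> 'k::comm_ring_1 mpoly" where
  "xvar i j = xmon (Poly_Mapping.single (min i j, max i j) 1)"

definition J :: "nat \<Rightarrow> 'k::comm_ring_1 mpoly set" where
  "J n = {f. \<exists>g. f = (\<Sum>(i,j)\<in>OffPairs n. g (i,j) * (xvar i i * xvar j j - xvar i j ^ 2))}"

definition eqJ :: "nat \<Rightarrow> 'k::comm_ring_1 mpoly \<Rightarrow> 'k mpoly \<Rightarrow> bool" where
  "eqJ n f g \<longleftrightarrow> f - g \<in> J n"

definition Vn :: "nat \<Rightarrow> expvec \<Rightarrow> nat \<Rightarrow> nat" where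
  "Vn n u k = (\<Sum>p\<in>Pairs n. Poly_Mapping.lookup u p *
        ((if fst p = k then 1 else 0) + (if snd p = k then 1 else 0)))"

definition fiber :: "nat \<Rightarrow> (nat \<Rightarrow> nat) \<Rightarrow> expvec set" where
  "fiber n b = {u. Poly_Mapping.keys u \<subseteq> Pairs n \<and> (\<forall>k\<in>{1..n}. Vn n u k = b k)}"

text \<open>the lattice generator [ij|ij] = e_ii + e_jj - e_ij - e_ji (for i < j), as a vector on pairs\<close>
definition gen_ij :: "nat \<times> nat \<Rightarrow> nat \<times> nat \<Rightarrow> int" where
  "gen_ij q p = (case q of (i,j) \<Rightarrow>
      (if p = (i,i) then 1 else 0) + (if p = (j,j) then 1 else 0) - (if p = (i,j) then 2 else 0))"

definition inLp :: "nat \<Rightarrow> expvec \<Rightarrow> expvec \<Rightarrow> bool" where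
  "inLp n u v \<longleftrightarrow> (\<exists>c :: nat \<times> nat \<Rightarrow> int. \<forall>p\<in>Pairs n.
       int (Poly_Mapping.lookup u p) - int (Poly_Mapping.lookup v p) = (\<Sum>q\<in>OffPairs n. c q * gen_ij q p))"

definition fiber_rel :: "nat \<Rightarrow> (nat \<Rightarrow> nat) \<Rightarrow> (expvec \<times> expvec) set" where
  "fiber_rel n b = {(u,v). u \<in> fiber n b \<and> v \<in> fiber n b \<and> inLp n u v}"

definition class_sum :: "nat \<Rightarrow> (nat \<Rightarrow> nat) \<Rightarrow> 'k::comm_ring_1 mpoly" where
  "class_sum n b = (\<Sum>C\<in>fiber n b // fiber_rel n b. xmon (SOME a. a \<in> C))"

definition p_plus_even :: "nat \<Rightarrow> 'k::comm_ring_1 mpoly" where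
  "p_plus_even n = class_sum n (\<lambda>_. n - 2)"

definition p_plus_odd :: "nat \<Rightarrow> nat \<Rightarrow> 'k::comm_ring_1 mpoly" where
  "p_plus_odd n i = class_sum n (\<lambda>k. n - 2 + (if k = i then 1 else 0))"

definition p_n :: "nat \<Rightarrow> 'k::comm_ring_1 mpoly" where
  "p_n n = (\<Prod>(i,j)\<in>{(i,j). 1 \<le> i \<and> i < j \<and> j \<le> n - 1}.
              xvar i j * xvar n n + xvar i n * xvar j n)"

definition sigma :: "nat \<Rightarrow> nat" where
  "sigma m = (m choose 2) - m div 2"

end

theory Submission
  imports Defs
begin

text \<open>Two monomials in the same fiber of \<open>V\<^sub>n\<close> whose off-diagonal exponents have the
  same parities are congruent modulo \<open>J\<^sub>n\<close>: replacing \<open>x\<^sub>i\<^sub>j\<^sup>2\<close> by \<open>x\<^sub>i\<^sub>i x\<^sub>j\<^sub>j\<close> reduces both to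
  the same monomial. Two points of a fiber are \<open>L'\<^sub>n\<close>-equivalent exactly when these parities
  agree, and the parities in the last column are forced by the others, so the classes of a
  fiber correspond to the subsets \<open>S\<close> of off-diagonal pairs of \<open>[n-1]\<close>, each of which
  occurs. Expanding \<open>p\<^sub>n\<close> also gives one monomial per \<open>S\<close> (take \<open>x\<^sub>i\<^sub>j x\<^sub>n\<^sub>n\<close> for
  \<open>ij \<in> S\<close> and \<open>x\<^sub>i\<^sub>n x\<^sub>j\<^sub>n\<close> otherwise), with parity pattern \<open>S\<close>. After multiplying the
  class representatives by \<open>x\<^sub>n\<^sub>n\<^sup>\<sigma>\<close> (and \<open>p\<^sub>n\<close> by \<open>x\<^sub>i\<^sub>n\<close> in the odd case) both sides have
  the same \<open>V\<^sub>n\<close>-image, the exponent \<open>\<sigma>\<close> being exactly what balances row \<open>n\<close>, and the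
  two sums agree term by term modulo \<open>J\<^sub>n\<close>.\<close>

abbreviation lookup :: "expvec \<Rightarrow> nat \<times> nat \<Rightarrow> nat" where
  "lookup \<equiv> Poly_Mapping.lookup"

abbreviation keys :: "expvec \<Rightarrow> (nat \<times> nat) set" where
  "keys \<equiv> Poly_Mapping.keys"

abbreviation unit_vec :: "nat \<times> nat \<Rightarrow> expvec" where
  "unit_vec p \<equiv> Poly_Mapping.single p 1"

lemma keys_sum_subset: "(\<And>x. x \<in> X \<Longrightarrow> keys (f x) \<subseteq> P) \<Longrightarrow> keys (\<Sum>x\<in>X. f x) \<subseteq> P"
  using keys_sum[of f X] by blast

lemma xmon_add: "xmon (a + b) = (xmon a * xmon b :: 'k::comm_ring_1 mpoly)"
  by (simp add: xmon_def mult_single)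

lemma xmon_0: "xmon 0 = (1 :: 'k::comm_ring_1 mpoly)"
  by (simp add: xmon_def)

lemma xmon_sum: "(\<Prod>q\<in>X. xmon (f q)) = (xmon (\<Sum>q\<in>X. f q) :: 'k::comm_ring_1 mpoly)"
  by (induction X rule: infinite_finite_induct) (auto simp: xmon_0 xmon_add)

lemma xvar_power: "xvar i j ^ k = (xmon (Poly_Mapping.single (min i j, max i j) k) :: 'k::comm_ring_1 mpoly)"
  by (induction k) (auto simp: xvar_def xmon_0 xmon_add[symmetric] single_add[symmetric])

lemma xvar_eq_xmon: "i \<le> j \<Longrightarrow> xvar i j = xmon (unit_vec (i,j))"
  by (simp add: xvar_def)

lemma finite_OffPairs: "finite (OffPairs n)"
  by (rule finite_subset[of _ "{1..n} \<times> {1..n}"]) (auto simp: OffPairs_def)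

lemma finite_Pairs: "finite (Pairs n)"
  by (rule finite_subset[of _ "{1..n} \<times> {1..n}"]) (auto simp: Pairs_def)

lemma Pairs_eq_diagonal_Un_OffPairs: "Pairs n = (\<lambda>k. (k,k)) ` {1..n} \<union> OffPairs n"
  by (auto simp: Pairs_def OffPairs_def)

lemma OffPairs_subset_Pairs: "OffPairs n \<subseteq> Pairs n"
  by (auto simp: Pairs_def OffPairs_def)

lemma OffPairs_pred_subset: "OffPairs (n - 1) \<subseteq> OffPairs n"
  by (auto simp: OffPairs_def)

subsection \<open>The ideal of principal 2-minors\<close>

definition minor2 :: "nat \<times> nat \<Rightarrow> 'k::comm_ring_1 mpoly" where
  "minor2 q = xvar (fst q) (fst q) * xvar (snd q) (snd q) - xvar (fst q) (snd q) ^ 2"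

lemma J_iff: "f \<in> J n \<longleftrightarrow> (\<exists>g. f = (\<Sum>q\<in>OffPairs n. g q * minor2 q))"
  unfolding J_def minor2_def by (simp add: case_prod_beta)

lemma J_0: "0 \<in> J n"
  unfolding J_iff by (intro exI[of _ "\<lambda>_. 0"]) simp

lemma J_add: "f \<in> J n \<Longrightarrow> g \<in> J n \<Longrightarrow> f + g \<in> J n"
  unfolding J_iff by (auto simp: sum.distrib[symmetric] distrib_right intro: exI[of _ "\<lambda>q. _ q + _ q"])

lemma J_mult_left: "f \<in> J n \<Longrightarrow> h * f \<in> J n"
  unfolding J_iff by (auto simp: sum_distrib_left mult.assoc intro: exI[of _ "\<lambda>q. h * _ q"])

lemma J_minor2: "q \<in> OffPairs n \<Longrightarrow> h * minor2 q \<in> J n"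
  unfolding J_iff using finite_OffPairs
  by (intro exI[of _ "\<lambda>p. if p = q then h else 0"]) (simp add: if_distrib[of "\<lambda>x. x * _"] sum.delta cong: if_cong)

lemma eqJ_refl: "eqJ n f f"
  by (simp add: eqJ_def J_0)

lemma eqJ_sym: "eqJ n f g \<Longrightarrow> eqJ n g f"
  unfolding eqJ_def using J_mult_left[of "f - g" n "-1"] by simp

lemma eqJ_trans: "eqJ n f g \<Longrightarrow> eqJ n g h \<Longrightarrow> eqJ n f h"
  unfolding eqJ_def using J_add[of "f - g" n "g - h"] by simp

lemma eqJ_sum: "(\<And>x. x \<in> X \<Longrightarrow> eqJ n (f x) (g x)) \<Longrightarrow> eqJ n (\<Sum>x\<in>X. f x) (\<Sum>x\<in>X. g x)"
  unfolding eqJ_def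
proof (induction X rule: infinite_finite_induct)
  case (insert x X)
  then show ?case
    using J_add[of "f x - g x" n "sum f X - sum g X"] by (simp add: algebra_simps)
qed (auto simp: J_0)

subsection \<open>The matrix \<open>V\<^sub>n\<close>\<close>

definition incidence :: "nat \<times> nat \<Rightarrow> nat \<Rightarrow> nat" where
  "incidence p k = (if fst p = k then 1 else 0) + (if snd p = k then 1 else 0)"

definition off_incident :: "nat \<Rightarrow> nat \<Rightarrow> (nat \<times> nat) set" where
  "off_incident n k = {p \<in> OffPairs n. fst p = k \<or> snd p = k}"

lemma Vn_eq_sum_incidence: "Vn n u k = (\<Sum>p\<in>Pairs n. lookup u p * incidence p k)"
  unfolding Vn_def incidence_def ..

lemma Vn_add: "Vn n (u + v) k = Vn n u k + Vn n v k"
  unfolding Vn_def by (simp add: lookup_add sum.distrib algebra_simps)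

lemma Vn_0: "Vn n 0 k = 0"
  by (simp add: Vn_def)

lemma Vn_sum: "Vn n (\<Sum>x\<in>X. f x) k = (\<Sum>x\<in>X. Vn n (f x) k)"
  by (induction X rule: infinite_finite_induct) (auto simp: Vn_0 Vn_add)

lemma Vn_single: "p \<in> Pairs n \<Longrightarrow> Vn n (Poly_Mapping.single p c) k = c * incidence p k"
  unfolding Vn_eq_sum_incidence using finite_Pairs
  by (simp add: lookup_single when_def if_distrib[of "\<lambda>x. x * _"] sum.delta cong: if_cong)

lemma sum_filter_OffPairs: "(\<Sum>p\<in>OffPairs n. if fst p = k \<or> snd p = k then f p else 0) = sum f (off_incident n k)"
  unfolding off_incident_def using finite_OffPairs by (simp add: sum.inter_filter)

lemma Vn_diagonal_decomp:
  assumes "k \<in> {1..n}"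
  shows "Vn n u k = 2 * lookup u (k,k) + (\<Sum>p\<in>off_incident n k. lookup u p)"
proof -
  have disj: "(\<lambda>i. (i,i)) ` {1..n} \<inter> OffPairs n = {}"
    by (auto simp: OffPairs_def)
  have diag: "(\<Sum>p\<in>(\<lambda>i. (i,i)) ` {1..n}. lookup u p * incidence p k) = 2 * lookup u (k,k)"
  proof -
    have "(\<Sum>p\<in>(\<lambda>i. (i,i)) ` {1..n}. lookup u p * incidence p k)
        = (\<Sum>i\<in>{1..n}. if i = k then 2 * lookup u (k,k) else 0)"
      by (subst sum.reindex, simp add: inj_on_def, rule sum.cong) (auto simp: incidence_def)
    also have "\<dots> = 2 * lookup u (k,k)"
      using assms by simp
    finally show ?thesis .
  qed
  have off: "(\<Sum>p\<in>OffPairs n. lookup u p * incidence p k) = (\<Sum>p\<in>off_incident n k. lookup u p)"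
    unfolding sum_filter_OffPairs[symmetric]
    by (rule sum.cong) (auto simp: incidence_def OffPairs_def)
  have "Vn n u k = (\<Sum>p\<in>(\<lambda>i. (i,i)) ` {1..n}. lookup u p * incidence p k)
      + (\<Sum>p\<in>OffPairs n. lookup u p * incidence p k)"
    unfolding Vn_eq_sum_incidence Pairs_eq_diagonal_Un_OffPairs
    using disj finite_OffPairs by (intro sum.union_disjoint) auto
  then show ?thesis
    unfolding diag off .
qed

lemma even_sum_iff_cong:
  fixes f g :: "'a \<Rightarrow> nat"
  shows "(\<And>x. x \<in> X \<Longrightarrow> even (f x) \<longleftrightarrow> even (g x)) \<Longrightarrow> even (sum f X) \<longleftrightarrow> even (sum g X)"
  by (induction X rule: infinite_finite_induct) auto

lemma even_iff_of_double_add_eq: "2 * a + x = 2 * b + (y::nat) \<Longrightarrow> even x \<longleftrightarrow> even y"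
  by presburger

text \<open>Row \<open>k\<close> of \<open>V\<^sub>n\<close> counts the entry \<open>(k,n)\<close> once and the diagonal entry twice.\<close>

lemma even_lookup_last_column_determined:
  assumes V: "\<forall>k\<in>{1..n}. Vn n u k = Vn n v k"
    and P: "\<forall>q\<in>OffPairs (n - 1). even (lookup u q) \<longleftrightarrow> even (lookup v q)"
    and p: "p \<in> OffPairs n"
  shows "even (lookup u p) \<longleftrightarrow> even (lookup v p)"
proof (cases "snd p < n")
  case True
  with p P show ?thesis by (auto simp: OffPairs_def)
next
  case False
  then obtain k where p_eq: "p = (k,n)" and k: "1 \<le> k" "k < n"
    using p by (cases p) (auto simp: OffPairs_def)
  let ?A = "{q \<in> OffPairs (n - 1). fst q = k \<or> snd q = k}"
  have split: "off_incident n k = insert (k,n) ?A" "(k,n) \<notin> ?A"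
    using k by (auto simp: off_incident_def OffPairs_def)
  have row: "Vn n w k = 2 * lookup w (k,k) + (lookup w (k,n) + (\<Sum>q\<in>?A. lookup w q))" for w
    using Vn_diagonal_decomp[of k n w] k split finite_OffPairs by simp
  have "even (lookup u (k,n) + (\<Sum>q\<in>?A. lookup u q)) \<longleftrightarrow> even (lookup v (k,n) + (\<Sum>q\<in>?A. lookup v q))"
  proof -
    have "Vn n u k = Vn n v k"
      using V k by simp
    then show ?thesis
      unfolding row by (rule even_iff_of_double_add_eq)
  qed
  moreover have "even (\<Sum>q\<in>?A. lookup u q) \<longleftrightarrow> even (\<Sum>q\<in>?A. lookup v q)"
    using P by (intro even_sum_iff_cong) auto
  ultimately show ?thesis
    unfolding p_eq even_add by blast
qed

subsection \<open>Monomials modulo \<open>J\<^sub>n\<close>\<close>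

text \<open>The new monomial trades \<open>x\<^sub>i\<^sub>j\<^sup>2\<close> for \<open>x\<^sub>i\<^sub>i x\<^sub>j\<^sub>j\<close>, so the two differ by a multiple of a
  principal 2-minor.\<close>

lemma square_reduction_step:
  assumes ij: "(i,j) \<in> OffPairs n" and u: "keys u \<subseteq> Pairs n" and two: "2 \<le> lookup u (i,j)"
  obtains u' where "keys u' \<subseteq> Pairs n" "\<forall>k. Vn n u' k = Vn n u k"
    "\<forall>q\<in>OffPairs n. even (lookup u' q) \<longleftrightarrow> even (lookup u q)"
    "(\<Sum>q\<in>OffPairs n. lookup u' q) < (\<Sum>q\<in>OffPairs n. lookup u q)"
    "eqJ n (xmon u) (xmon u' :: 'k::comm_ring_1 mpoly)"
proof
  define w where "w = u - Poly_Mapping.single (i,j) 2"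
  have u_eq: "u = w + Poly_Mapping.single (i,j) 2"
    using two by (intro poly_mapping_eqI) (auto simp: w_def lookup_add lookup_minus lookup_single when_def)
  define u' where "u' = w + unit_vec (i,i) + unit_vec (j,j)"
  have ij': "i < j" "(i,j) \<in> Pairs n" "(i,i) \<in> Pairs n" "(j,j) \<in> Pairs n"
    using ij by (auto simp: OffPairs_def Pairs_def)
  have lookup_u: "lookup u q = lookup w q + (if q = (i,j) then 2 else 0)" for q
    by (subst u_eq) (auto simp: lookup_add lookup_single when_def)
  have lookup_u': "lookup u' q = lookup w q + (if q = (i,i) then 1 else 0) + (if q = (j,j) then 1 else 0)" for q
    by (auto simp: u'_def lookup_add lookup_single when_def)
  have "keys w \<subseteq> Pairs n"
    using u by (auto simp: in_keys_iff lookup_u)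
  then show "keys u' \<subseteq> Pairs n"
    using ij' keys_add[of "w + unit_vec (i,i)" "unit_vec (j,j)"] keys_add[of w "unit_vec (i,i)"]
    by (auto simp: u'_def)
  show "\<forall>k. Vn n u' k = Vn n u k"
    using ij' by (subst u_eq) (simp add: u'_def Vn_add Vn_single incidence_def)
  show "\<forall>q\<in>OffPairs n. even (lookup u' q) \<longleftrightarrow> even (lookup u q)"
    by (auto simp: lookup_u lookup_u' OffPairs_def)
  have "(\<Sum>q\<in>OffPairs n. lookup u' q) = (\<Sum>q\<in>OffPairs n. lookup w q)"
    by (rule sum.cong) (auto simp: lookup_u' OffPairs_def)
  also have "\<dots> < (\<Sum>q\<in>OffPairs n. lookup w q) + (\<Sum>q\<in>OffPairs n. if q = (i,j) then 2 else 0)"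
    using ij finite_OffPairs by simp
  also have "\<dots> = (\<Sum>q\<in>OffPairs n. lookup u q)"
    by (simp add: lookup_u sum.distrib)
  finally show "(\<Sum>q\<in>OffPairs n. lookup u' q) < (\<Sum>q\<in>OffPairs n. lookup u q)" .
  have "xmon u - xmon u' = - xmon w * (minor2 (i,j) :: 'k mpoly)"
    using ij' by (simp add: u_eq u'_def minor2_def xvar_power xvar_eq_xmon[of i i] xvar_eq_xmon[of j j] xmon_add algebra_simps)
  then show "eqJ n (xmon u) (xmon u' :: 'k mpoly)"
    unfolding eqJ_def using J_minor2[OF ij] by metis
qed

definition off_reduced :: "nat \<Rightarrow> expvec \<Rightarrow> bool" where
  "off_reduced n u \<longleftrightarrow> (\<forall>q\<in>OffPairs n. lookup u q \<le> 1)"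

lemma exists_off_reduced_eqJ:
  assumes "keys u \<subseteq> Pairs n"
  obtains u' where "keys u' \<subseteq> Pairs n" "\<forall>k. Vn n u' k = Vn n u k"
    "\<forall>q\<in>OffPairs n. even (lookup u' q) \<longleftrightarrow> even (lookup u q)"
    "off_reduced n u'" "eqJ n (xmon u) (xmon u' :: 'k::comm_ring_1 mpoly)"
  using assms
proof (induction "\<Sum>q\<in>OffPairs n. lookup u q" arbitrary: u thesis rule: less_induct)
  case less
  show ?case
  proof (cases "off_reduced n u")
    case True
    then show ?thesis
      using less.prems by (intro less.prems(1)[of u]) (auto simp: eqJ_refl)
  next
    case False
    then obtain i j where "(i,j) \<in> OffPairs n" "2 \<le> lookup u (i,j)"
      by (force simp: off_reduced_def)
    then obtain v where v: "keys v \<subseteq> Pairs n" "\<forall>k. Vn n v k = Vn n u k"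
      "\<forall>q\<in>OffPairs n. even (lookup v q) \<longleftrightarrow> even (lookup u q)"
      "(\<Sum>q\<in>OffPairs n. lookup v q) < (\<Sum>q\<in>OffPairs n. lookup u q)"
      "eqJ n (xmon u) (xmon v :: 'k mpoly)"
      using square_reduction_step less.prems(2) by metis
    obtain u' where "keys u' \<subseteq> Pairs n" "\<forall>k. Vn n u' k = Vn n v k"
      "\<forall>q\<in>OffPairs n. even (lookup u' q) \<longleftrightarrow> even (lookup v q)"
      "off_reduced n u'" "eqJ n (xmon v) (xmon u' :: 'k mpoly)"
      using less.hyps[OF v(4) _ v(1)] by blast
    with v show ?thesis
      by (intro less.prems(1)[of u']) (auto intro: eqJ_trans)
  qed
qed

text \<open>Once the off-diagonal entries agree, the \<open>V\<^sub>n\<close>-image fixes the diagonal ones.\<close>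

lemma off_reduced_eqI:
  assumes u: "keys u \<subseteq> Pairs n" "off_reduced n u" and v: "keys v \<subseteq> Pairs n" "off_reduced n v"
    and V: "\<forall>k\<in>{1..n}. Vn n u k = Vn n v k"
    and P: "\<forall>q\<in>OffPairs n. even (lookup u q) \<longleftrightarrow> even (lookup v q)"
  shows "u = v"
proof (rule poly_mapping_eqI)
  have off: "lookup u q = lookup v q" if "q \<in> OffPairs n" for q
    using u(2) v(2) P that unfolding off_reduced_def
    by (metis One_nat_def even_zero le_Suc_eq le_zero_eq odd_one)
  fix q
  consider "q \<in> OffPairs n" | k where "k \<in> {1..n}" "q = (k,k)" | "q \<notin> Pairs n"
    using Pairs_eq_diagonal_Un_OffPairs by blast
  then show "lookup u q = lookup v q"
  proof cases
    case (2 k)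
    have "(\<Sum>p\<in>off_incident n k. lookup u p) = (\<Sum>p\<in>off_incident n k. lookup v p)"
      by (rule sum.cong) (auto simp: off_incident_def off)
    then show ?thesis
      using V 2 Vn_diagonal_decomp[OF 2(1), of u] Vn_diagonal_decomp[OF 2(1), of v] by auto
  next
    case 3
    then have "q \<notin> keys u" "q \<notin> keys v"
      using u(1) v(1) by blast+
    then show ?thesis
      by (simp add: in_keys_iff)
  qed (rule off)
qed

lemma xmon_eqJ_if_Vn_parity_eq:
  assumes u: "keys u \<subseteq> Pairs n" and v: "keys v \<subseteq> Pairs n"
    and V: "\<forall>k\<in>{1..n}. Vn n u k = Vn n v k"
    and P: "\<forall>q\<in>OffPairs n. even (lookup u q) \<longleftrightarrow> even (lookup v q)"
  shows "eqJ n (xmon u) (xmon v :: 'k::comm_ring_1 mpoly)"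
proof -
  obtain u' where u': "keys u' \<subseteq> Pairs n" "\<forall>k. Vn n u' k = Vn n u k"
    "\<forall>q\<in>OffPairs n. even (lookup u' q) \<longleftrightarrow> even (lookup u q)"
    "off_reduced n u'" "eqJ n (xmon u) (xmon u' :: 'k mpoly)"
    using exists_off_reduced_eqJ[OF u] by blast
  obtain v' where v': "keys v' \<subseteq> Pairs n" "\<forall>k. Vn n v' k = Vn n v k"
    "\<forall>q\<in>OffPairs n. even (lookup v' q) \<longleftrightarrow> even (lookup v q)"
    "off_reduced n v'" "eqJ n (xmon v) (xmon v' :: 'k mpoly)"
    using exists_off_reduced_eqJ[OF v] by blast
  have "u' = v'"
    using u' v' V P by (intro off_reduced_eqI) auto
  with u'(5) v'(5) show ?thesis
    by (metis eqJ_sym eqJ_trans)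
qed

subsection \<open>Equivalence classes of a fiber\<close>

lemma gen_ij_OffPairs: "q \<in> OffPairs n \<Longrightarrow> p \<in> OffPairs n \<Longrightarrow> gen_ij q p = (if q = p then -2 else 0)"
  by (cases q; cases p) (auto simp: gen_ij_def OffPairs_def)

lemma sum_gen_ij_off:
  assumes "p \<in> OffPairs n"
  shows "(\<Sum>q\<in>OffPairs n. c q * gen_ij q p) = - 2 * c p"
proof -
  have "(\<Sum>q\<in>OffPairs n. c q * gen_ij q p) = (\<Sum>q\<in>OffPairs n. if q = p then - 2 * c p else 0)"
    using assms by (intro sum.cong) (auto simp: gen_ij_OffPairs)
  then show ?thesis
    using assms finite_OffPairs by simp
qed

lemma sum_gen_ij_diagonal:
  "(\<Sum>q\<in>OffPairs n. c q * gen_ij q (k,k)) = (\<Sum>q\<in>off_incident n k. c q)"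
  unfolding sum_filter_OffPairs[symmetric]
  by (rule sum.cong) (auto simp: gen_ij_def OffPairs_def)

lemma inLp_imp_even_iff:
  assumes "inLp n u v" "p \<in> OffPairs n"
  shows "even (lookup u p) \<longleftrightarrow> even (lookup v p)"
proof -
  obtain c where "int (lookup u p) - int (lookup v p) = (\<Sum>q\<in>OffPairs n. c q * gen_ij q p)"
    using assms OffPairs_subset_Pairs unfolding inLp_def by blast
  then have "int (lookup u p) - int (lookup v p) = - 2 * c p"
    using sum_gen_ij_off[OF assms(2)] by simp
  then have "even (int (lookup u p) - int (lookup v p))"
    by simp
  then show ?thesis
    by simp
qed

lemma inLp_if_Vn_even_iff:
  assumes V: "\<forall>k\<in>{1..n}. Vn n u k = Vn n v k"
    and P: "\<forall>q\<in>OffPairs n. even (lookup u q) \<longleftrightarrow> even (lookup v q)"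
  shows "inLp n u v"
  unfolding inLp_def
proof (intro exI ballI)
  define c where "c q = (int (lookup v q) - int (lookup u q)) div 2" for q
  have c: "2 * c q = int (lookup v q) - int (lookup u q)" if "q \<in> OffPairs n" for q
  proof -
    have "even (int (lookup v q) - int (lookup u q))"
      using P that by simp
    then show ?thesis
      unfolding c_def by simp
  qed
  fix p assume "p \<in> Pairs n"
  then consider "p \<in> OffPairs n" | k where "k \<in> {1..n}" "p = (k,k)"
    using Pairs_eq_diagonal_Un_OffPairs by blast
  then show "int (lookup u p) - int (lookup v p) = (\<Sum>q\<in>OffPairs n. c q * gen_ij q p)"
  proof cases
    case 1
    then show ?thesis
      using c[OF 1] by (simp add: sum_gen_ij_off)
  next
    case (2 k)
    have "2 * lookup u (k,k) + (\<Sum>q\<in>off_incident n k. lookup u q)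
        = 2 * lookup v (k,k) + (\<Sum>q\<in>off_incident n k. lookup v q)"
      using V 2 by (simp add: Vn_diagonal_decomp[symmetric])
    then have "int (2 * lookup u (k,k) + (\<Sum>q\<in>off_incident n k. lookup u q))
        = int (2 * lookup v (k,k) + (\<Sum>q\<in>off_incident n k. lookup v q))"
      by (rule arg_cong)
    then have "2 * int (lookup u (k,k)) + (\<Sum>q\<in>off_incident n k. int (lookup u q))
        = 2 * int (lookup v (k,k)) + (\<Sum>q\<in>off_incident n k. int (lookup v q))"
      by (simp add: of_nat_sum)
    moreover have "(\<Sum>q\<in>off_incident n k. int (lookup v q)) - (\<Sum>q\<in>off_incident n k. int (lookup u q))
        = 2 * (\<Sum>q\<in>off_incident n k. c q)"
      by (simp add: sum_subtractf[symmetric] sum_distrib_left c off_incident_def)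
    ultimately show ?thesis
      unfolding 2 sum_gen_ij_diagonal by linarith
  qed
qed

lemma fiberD:
  assumes "u \<in> fiber n b"
  shows "keys u \<subseteq> Pairs n" "\<forall>k\<in>{1..n}. Vn n u k = b k"
  using assms by (simp_all add: fiber_def)

lemma even_lookup_iff_in_fiber:
  assumes "u \<in> fiber n b" "v \<in> fiber n b"
    and "\<forall>q\<in>OffPairs (n - 1). even (lookup u q) \<longleftrightarrow> even (lookup v q)"
  shows "\<forall>p\<in>OffPairs n. even (lookup u p) \<longleftrightarrow> even (lookup v p)"
proof -
  have "\<forall>k\<in>{1..n}. Vn n u k = Vn n v k"
    using fiberD(2)[OF assms(1)] fiberD(2)[OF assms(2)] by simp
  then show ?thesis
    using even_lookup_last_column_determined assms(3) by blast
qed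

lemma fiber_rel_iff:
  assumes "u \<in> fiber n b" "v \<in> fiber n b"
  shows "(u,v) \<in> fiber_rel n b \<longleftrightarrow> (\<forall>q\<in>OffPairs (n - 1). even (lookup u q) \<longleftrightarrow> even (lookup v q))"
proof
  assume "(u,v) \<in> fiber_rel n b"
  then have "inLp n u v"
    by (simp add: fiber_rel_def)
  then show "\<forall>q\<in>OffPairs (n - 1). even (lookup u q) \<longleftrightarrow> even (lookup v q)"
    using inLp_imp_even_iff OffPairs_pred_subset by blast
next
  assume "\<forall>q\<in>OffPairs (n - 1). even (lookup u q) \<longleftrightarrow> even (lookup v q)"
  then have "\<forall>p\<in>OffPairs n. even (lookup u p) \<longleftrightarrow> even (lookup v p)"
    by (rule even_lookup_iff_in_fiber[OF assms])
  then have "inLp n u v"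
    using fiberD(2)[OF assms(1)] fiberD(2)[OF assms(2)] by (intro inLp_if_Vn_even_iff) auto
  with assms show "(u,v) \<in> fiber_rel n b"
    by (simp add: fiber_rel_def)
qed

lemma equiv_fiber_rel: "equiv (fiber n b) (fiber_rel n b)"
proof (rule equivI)
  show "fiber_rel n b \<subseteq> fiber n b \<times> fiber n b"
    by (auto simp: fiber_rel_def)
  have in_fiber: "u \<in> fiber n b" "v \<in> fiber n b" if "(u,v) \<in> fiber_rel n b" for u v
    using that by (simp_all add: fiber_rel_def)
  have "(u,u) \<in> fiber_rel n b" if "u \<in> fiber n b" for u
    using fiber_rel_iff[OF that that] by simp
  then show "refl_on (fiber n b) (fiber_rel n b)"
    by (auto simp: refl_on_def fiber_rel_def)
  show "sym (fiber_rel n b)"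
  proof (rule symI)
    fix u v assume uv: "(u,v) \<in> fiber_rel n b"
    then show "(v,u) \<in> fiber_rel n b"
      using fiber_rel_iff[OF in_fiber[OF uv]] fiber_rel_iff[OF in_fiber(2,1)[OF uv]] by simp
  qed
  show "trans (fiber_rel n b)"
  proof (rule transI)
    fix u v w assume uv: "(u,v) \<in> fiber_rel n b" and vw: "(v,w) \<in> fiber_rel n b"
    then show "(u,w) \<in> fiber_rel n b"
      using fiber_rel_iff[OF in_fiber[OF uv]] fiber_rel_iff[OF in_fiber[OF vw]]
        fiber_rel_iff[OF in_fiber(1)[OF uv] in_fiber(2)[OF vw]] by simp
  qed
qed

subsection \<open>Every parity pattern occurs in a fiber\<close>


lemma sum_incidence_OffPairs:
  assumes "1 \<le> k" "k \<le> m"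
  shows "(\<Sum>q\<in>OffPairs m. incidence q k) = m - 1"
proof -
  have first: "{q \<in> OffPairs m. fst q = k} = (\<lambda>j. (k,j)) ` {k<..m}"
    and second: "{q \<in> OffPairs m. snd q = k} = (\<lambda>i. (i,k)) ` {1..<k}"
    using assms by (auto simp: OffPairs_def)
  have "(\<Sum>q\<in>OffPairs m. incidence q k) = card {q \<in> OffPairs m. fst q = k} + card {q \<in> OffPairs m. snd q = k}"
    using finite_OffPairs by (simp add: incidence_def sum.distrib sum.inter_filter[symmetric])
  also have "\<dots> = (m - k) + (k - 1)"
    unfolding first second by (simp add: card_image inj_on_def)
  finally show ?thesis
    using assms by simp
qed

lemma sum_incidence_row: "q \<in> OffPairs m \<Longrightarrow> (\<Sum>i\<in>{1..m}. incidence q i) = 2"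
  by (auto simp: incidence_def sum.distrib OffPairs_def)

definition indicator_vec :: "(nat \<times> nat) set \<Rightarrow> expvec" where
  "indicator_vec S = (\<Sum>q\<in>S. unit_vec q)"

lemma lookup_indicator_vec: "finite S \<Longrightarrow> lookup (indicator_vec S) p = (if p \<in> S then 1 else 0)"
  by (simp add: indicator_vec_def lookup_sum lookup_single when_def)

lemma keys_indicator_vec: "S \<subseteq> Pairs n \<Longrightarrow> keys (indicator_vec S) \<subseteq> Pairs n"
  unfolding indicator_vec_def by (intro keys_sum_subset) auto

lemma Vn_indicator_vec:
  assumes S: "S \<subseteq> OffPairs (n - 1)"
  shows "k \<in> {1..n-1} \<Longrightarrow> Vn n (indicator_vec S) k \<le> n - 2"
    and "Vn n (indicator_vec S) n = 0"
    and "(\<Sum>i\<in>{1..n-1}. Vn n (indicator_vec S) i) = 2 * card S"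
proof -
  have "S \<subseteq> Pairs n"
    using S OffPairs_pred_subset OffPairs_subset_Pairs by blast
  then have Vn_eq: "Vn n (indicator_vec S) k = (\<Sum>q\<in>S. incidence q k)" for k
    unfolding indicator_vec_def Vn_sum by (intro sum.cong) (auto simp: Vn_single)
  show "Vn n (indicator_vec S) k \<le> n - 2" if "k \<in> {1..n-1}"
  proof -
    have "(\<Sum>q\<in>S. incidence q k) \<le> (\<Sum>q\<in>OffPairs (n - 1). incidence q k)"
      using S finite_OffPairs by (intro sum_mono2) auto
    also have "\<dots> = n - 2"
      using that sum_incidence_OffPairs[of k "n - 1"] by simp
    finally show ?thesis
      unfolding Vn_eq .
  qed
  show "Vn n (indicator_vec S) n = 0"
    unfolding Vn_eq using S by (intro sum.neutral) (auto simp: incidence_def OffPairs_def)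
  show "(\<Sum>i\<in>{1..n-1}. Vn n (indicator_vec S) i) = 2 * card S"
    unfolding Vn_eq using S sum_incidence_row by (subst sum.swap) (simp add: subset_eq)
qed

lemma le_if_same_parity: "(t::nat) \<le> n - 1 \<Longrightarrow> n - 2 \<le> r \<Longrightarrow> (even t \<longleftrightarrow> even r) \<Longrightarrow> t \<le> r"
  by presburger

lemma Vn_last_column_vec:
  assumes "k \<in> {1..n}"
  shows "Vn n (\<Sum>i\<in>{1..n-1}. Poly_Mapping.single (i,n) (t i)) k
    = (if k = n then (\<Sum>i\<in>{1..n-1}. t i) else t k)"
proof -
  have "Vn n (\<Sum>i\<in>{1..n-1}. Poly_Mapping.single (i,n) (t i)) k
      = (\<Sum>i\<in>{1..n-1}. if k = n then t i else if i = k then t k else 0)"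
    unfolding Vn_sum by (rule sum.cong) (auto simp: Vn_single Pairs_def incidence_def)
  then show ?thesis
    using assms by auto
qed

lemma Vn_diagonal_vec:
  assumes "k \<in> {1..n}"
  shows "Vn n (\<Sum>j\<in>{1..n}. Poly_Mapping.single (j,j) (d j)) k = 2 * d k"
proof -
  have "Vn n (\<Sum>j\<in>{1..n}. Poly_Mapping.single (j,j) (d j)) k = (\<Sum>j\<in>{1..n}. if j = k then 2 * d k else 0)"
    unfolding Vn_sum by (rule sum.cong) (auto simp: Vn_single Pairs_def incidence_def)
  then show ?thesis
    using assms by simp
qed

text \<open>The entry \<open>(i,n)\<close> takes the parity of \<open>r i\<close> and the diagonal absorbs the even
  rest; \<open>n - 2 \<le> r n\<close> leaves room in row \<open>n\<close> for the resulting last column.\<close>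

lemma exists_last_column_diagonal_vec:
  fixes r :: "nat \<Rightarrow> nat"
  assumes r_n: "n - 2 \<le> r n" and par: "even (\<Sum>i\<in>{1..n-1}. r i) \<longleftrightarrow> even (r n)"
  obtains w where "keys w \<subseteq> Pairs n" "\<forall>k\<in>{1..n}. Vn n w k = r k"
    "\<forall>q\<in>OffPairs (n - 1). lookup w q = 0"
proof
  define t where "t i = r i mod 2" for i
  define T where "T = (\<Sum>i\<in>{1..n-1}. t i)"
  define d where "d k = (if k = n then (r n - T) div 2 else r k div 2)" for k
  define column where "column = (\<Sum>i\<in>{1..n-1}. Poly_Mapping.single (i,n) (t i))"
  define diagonal where "diagonal = (\<Sum>k\<in>{1..n}. Poly_Mapping.single (k,k) (d k))"
  show "keys (column + diagonal) \<subseteq> Pairs n"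
    using keys_add[of column diagonal]
      keys_sum[of "\<lambda>i. Poly_Mapping.single (i,n) (t i)" "{1..n-1}"]
      keys_sum[of "\<lambda>k. Poly_Mapping.single (k,k) (d k)" "{1..n}"]
    by (fastforce simp: column_def diagonal_def Pairs_def)
  show "\<forall>q\<in>OffPairs (n - 1). lookup (column + diagonal) q = 0"
    by (auto simp: column_def diagonal_def lookup_add lookup_sum lookup_single when_def OffPairs_def)
  have T_le: "T \<le> r n"
  proof (rule le_if_same_parity[OF _ r_n])
    show "T \<le> n - 1"
      using sum_bounded_above[of "{1..n-1}" t 1] by (simp add: T_def t_def)
    have "even T \<longleftrightarrow> even (\<Sum>i\<in>{1..n-1}. r i)"
      unfolding T_def t_def by (rule even_sum_iff_cong) simp
    with par show "even T \<longleftrightarrow> even (r n)"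
      by simp
  qed
  have "even (r n - T)"
    using T_le par even_sum_iff_cong[of "{1..n-1}" t r] by (simp add: T_def t_def)
  show "\<forall>k\<in>{1..n}. Vn n (column + diagonal) k = r k"
  proof
    fix k assume k: "k \<in> {1..n}"
    have "Vn n (column + diagonal) k = (if k = n then T else t k) + 2 * d k"
      unfolding column_def diagonal_def Vn_add Vn_last_column_vec[OF k] Vn_diagonal_vec[OF k] T_def ..
    with \<open>even (r n - T)\<close> T_le show "Vn n (column + diagonal) k = r k"
      by (simp add: d_def t_def)
  qed
qed

lemma fiber_realizes_parity_pattern:
  assumes S: "S \<subseteq> OffPairs (n - 1)"
    and b_low: "\<forall>k\<in>{1..n-1}. n - 2 \<le> b k" and b_n: "n - 2 \<le> b n"
    and par: "even (\<Sum>i\<in>{1..n-1}. b i) \<longleftrightarrow> even (b n)"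
  shows "\<exists>u\<in>fiber n b. \<forall>q\<in>OffPairs (n - 1). odd (lookup u q) \<longleftrightarrow> q \<in> S"
proof -
  let ?d = "Vn n (indicator_vec S)"
  have d_le: "?d k \<le> b k" if "k \<in> {1..n-1}" for k
    using Vn_indicator_vec(1)[OF S that] b_low that by fastforce
  have "(\<Sum>i\<in>{1..n-1}. b i - ?d i) + 2 * card S = (\<Sum>i\<in>{1..n-1}. b i)"
    using d_le by (simp add: Vn_indicator_vec(3)[OF S, symmetric] sum.distrib[symmetric])
  then have "even (\<Sum>i\<in>{1..n-1}. b i - ?d i) \<longleftrightarrow> even (\<Sum>i\<in>{1..n-1}. b i)"
    by (metis even_add dvd_triv_left)
  then have "even (\<Sum>i\<in>{1..n-1}. b i - ?d i) \<longleftrightarrow> even (b n - ?d n)"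
    using par Vn_indicator_vec(2)[OF S] by simp
  moreover have "n - 2 \<le> b n - ?d n"
    using b_n Vn_indicator_vec(2)[OF S] by simp
  ultimately obtain w where w: "keys w \<subseteq> Pairs n" "\<forall>k\<in>{1..n}. Vn n w k = b k - ?d k"
    "\<forall>q\<in>OffPairs (n - 1). lookup w q = 0"
    using exists_last_column_diagonal_vec[of n "\<lambda>k. b k - ?d k"] by blast
  have S_Pairs: "S \<subseteq> Pairs n"
    using S OffPairs_pred_subset OffPairs_subset_Pairs by blast
  have "keys (indicator_vec S + w) \<subseteq> Pairs n"
    using keys_add[of "indicator_vec S" w] keys_indicator_vec[OF S_Pairs] w(1) by blast
  moreover have "Vn n (indicator_vec S + w) k = b k" if "k \<in> {1..n}" for k
    using that w(2) d_le Vn_indicator_vec(2)[OF S] by (cases "k = n") (auto simp: Vn_add)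
  moreover have "odd (lookup (indicator_vec S + w) q) \<longleftrightarrow> q \<in> S" if "q \<in> OffPairs (n - 1)" for q
    using that w(3) finite_subset[OF S finite_OffPairs] by (simp add: lookup_add lookup_indicator_vec)
  ultimately show ?thesis
    unfolding fiber_def by blast
qed

lemma some_in_fiber_class:
  assumes "C \<in> fiber n b // fiber_rel n b"
  shows "(SOME a. a \<in> C) \<in> C" "(SOME a. a \<in> C) \<in> fiber n b"
proof -
  show "(SOME a. a \<in> C) \<in> C"
    using in_quotient_imp_non_empty[OF equiv_fiber_rel assms] by (simp add: some_in_eq)
  then show "(SOME a. a \<in> C) \<in> fiber n b"
    using in_quotient_imp_subset[OF equiv_fiber_rel assms] by blast
qed

text \<open>Within a fiber the parities of the last column are forced by the others, so a
  class is determined by its off-diagonal parities in the first \<open>n - 1\<close> rows.\<close>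

lemma bij_betw_fiber_classes_parity_patterns:
  assumes surj: "\<And>S. S \<subseteq> OffPairs (n - 1) \<Longrightarrow>
      \<exists>u\<in>fiber n b. \<forall>q\<in>OffPairs (n - 1). odd (lookup u q) \<longleftrightarrow> q \<in> S"
  shows "bij_betw (\<lambda>C. {q \<in> OffPairs (n - 1). odd (lookup (SOME a. a \<in> C) q)})
      (fiber n b // fiber_rel n b) (Pow (OffPairs (n - 1)))"
    (is "bij_betw ?h ?Q _")
proof (rule bij_betw_imageI)
  show "inj_on ?h ?Q"
  proof (rule inj_onI)
    fix C D assume C: "C \<in> ?Q" and D: "D \<in> ?Q" and "?h C = ?h D"
    then have "((SOME a. a \<in> C), (SOME a. a \<in> D)) \<in> fiber_rel n b"
      using some_in_fiber_class[OF C] some_in_fiber_class[OF D] by (subst fiber_rel_iff) auto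
    then show "C = D"
      using quotient_eq_iff[OF equiv_fiber_rel C D] some_in_fiber_class[OF C] some_in_fiber_class[OF D] by blast
  qed
  show "?h ` ?Q = Pow (OffPairs (n - 1))"
  proof (intro equalityI subsetI)
    fix S assume "S \<in> Pow (OffPairs (n - 1))"
    then obtain u where u: "u \<in> fiber n b" "\<forall>q\<in>OffPairs (n - 1). odd (lookup u q) \<longleftrightarrow> q \<in> S"
      using surj by blast
    define C where "C = fiber_rel n b `` {u}"
    have C: "C \<in> ?Q"
      unfolding C_def using u(1) by (rule quotientI)
    have "(u, SOME a. a \<in> C) \<in> fiber_rel n b"
      using some_in_fiber_class(1)[OF C] by (simp add: C_def)
    then have "?h C = S"
      using u \<open>S \<in> Pow _\<close> fiber_rel_iff[OF u(1) some_in_fiber_class(2)[OF C]] by auto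
    with C show "S \<in> ?h ` ?Q"
      by blast
  qed auto
qed

lemma xmon_mult_class_sum_eqJ:
  fixes e :: expvec and m :: "(nat \<times> nat) set \<Rightarrow> expvec"
  assumes e: "keys e \<subseteq> Pairs n" "\<forall>q\<in>OffPairs (n - 1). lookup e q = 0"
    and m_keys: "\<And>S. S \<subseteq> OffPairs (n - 1) \<Longrightarrow> keys (m S) \<subseteq> Pairs n"
    and m_Vn: "\<And>S k. S \<subseteq> OffPairs (n - 1) \<Longrightarrow> k \<in> {1..n} \<Longrightarrow> Vn n (m S) k = b k + Vn n e k"
    and m_odd: "\<And>S q. S \<subseteq> OffPairs (n - 1) \<Longrightarrow> q \<in> OffPairs (n - 1) \<Longrightarrow> odd (lookup (m S) q) \<longleftrightarrow> q \<in> S"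
    and surj: "\<And>S. S \<subseteq> OffPairs (n - 1) \<Longrightarrow>
      \<exists>u\<in>fiber n b. \<forall>q\<in>OffPairs (n - 1). odd (lookup u q) \<longleftrightarrow> q \<in> S"
  shows "eqJ n (xmon e * class_sum n b) (\<Sum>S\<in>Pow (OffPairs (n - 1)). xmon (m S) :: 'k::comm_ring_1 mpoly)"
proof -
  let ?Q = "fiber n b // fiber_rel n b"
  let ?rep = "\<lambda>C. SOME a. a \<in> C"
  let ?h = "\<lambda>C. {q \<in> OffPairs (n - 1). odd (lookup (?rep C) q)}"
  have "(\<Sum>S\<in>Pow (OffPairs (n - 1)). xmon (m S) :: 'k mpoly) = (\<Sum>C\<in>?Q. xmon (m (?h C)))"
    by (rule sum.reindex_bij_betw[OF bij_betw_fiber_classes_parity_patterns[OF surj], symmetric])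
  moreover have "eqJ n (xmon (e + ?rep C)) (xmon (m (?h C)) :: 'k mpoly)" if C: "C \<in> ?Q" for C
  proof (rule xmon_eqJ_if_Vn_parity_eq)
    have S: "?h C \<subseteq> OffPairs (n - 1)"
      by auto
    note rep = fiberD[OF some_in_fiber_class(2)[OF C]]
    show "keys (e + ?rep C) \<subseteq> Pairs n"
      using keys_add[of e "?rep C"] e(1) rep(1) by blast
    show "keys (m (?h C)) \<subseteq> Pairs n"
      using m_keys[OF S] .
    show V: "\<forall>k\<in>{1..n}. Vn n (e + ?rep C) k = Vn n (m (?h C)) k"
      using rep(2) m_Vn[OF S] by (simp add: Vn_add)
    have "\<forall>q\<in>OffPairs (n - 1). even (lookup (e + ?rep C) q) \<longleftrightarrow> even (lookup (m (?h C)) q)"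
      using e(2) m_odd[OF S] by (auto simp: lookup_add)
    then show "\<forall>q\<in>OffPairs n. even (lookup (e + ?rep C) q) \<longleftrightarrow> even (lookup (m (?h C)) q)"
      using even_lookup_last_column_determined[OF V] by blast
  qed
  ultimately show ?thesis
    unfolding class_sum_def sum_distrib_left xmon_add[symmetric] by (simp add: eqJ_sum)
qed

subsection \<open>Expansion of \<open>p\<^sub>n\<close>\<close>

definition p_n_exps :: "nat \<Rightarrow> (nat \<times> nat) set \<Rightarrow> expvec" where
  "p_n_exps n S = (\<Sum>q\<in>S. unit_vec q + unit_vec (n,n))
      + (\<Sum>q\<in>OffPairs (n - 1) - S. unit_vec (fst q, n) + unit_vec (snd q, n))"

lemma p_n_eq_sum_xmon: "p_n n = (\<Sum>S\<in>Pow (OffPairs (n - 1)). xmon (p_n_exps n S) :: 'k::comm_ring_1 mpoly)"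
proof -
  have "p_n n = (\<Prod>q\<in>OffPairs (n - 1).
      xmon (unit_vec q + unit_vec (n,n)) + xmon (unit_vec (fst q, n) + unit_vec (snd q, n)) :: 'k mpoly)"
    unfolding p_n_def OffPairs_def by (intro prod.cong) (auto simp: xvar_eq_xmon xmon_add)
  also have "\<dots> = (\<Sum>S\<in>Pow (OffPairs (n - 1)). (\<Prod>q\<in>S. xmon (unit_vec q + unit_vec (n,n)))
      * (\<Prod>q\<in>OffPairs (n - 1) - S. xmon (unit_vec (fst q, n) + unit_vec (snd q, n))))"
    by (rule prod_add[OF finite_OffPairs])
  finally show ?thesis
    by (simp add: p_n_exps_def xmon_sum xmon_add[symmetric])
qed

lemma keys_p_n_exps: "S \<subseteq> OffPairs (n - 1) \<Longrightarrow> keys (p_n_exps n S) \<subseteq> Pairs n"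
  unfolding p_n_exps_def
  by (intro order.trans[OF keys_add] Un_least keys_sum_subset order.trans[OF keys_add])
    (auto simp: Pairs_def OffPairs_def)

lemma card_OffPairs: "card (OffPairs m) = m choose 2"
proof (induction m)
  case 0
  have "OffPairs 0 = {}"
    by (auto simp: OffPairs_def)
  then show ?case
    by simp
next
  case (Suc m)
  have "OffPairs (Suc m) = OffPairs m \<union> (\<lambda>i. (i, Suc m)) ` {1..m}"
    and "OffPairs m \<inter> (\<lambda>i. (i, Suc m)) ` {1..m} = {}"
    by (auto simp: OffPairs_def)
  then have "card (OffPairs (Suc m)) = card (OffPairs m) + m"
    using finite_OffPairs by (simp add: card_Un_disjoint card_image inj_on_def)
  then show ?case
    using Suc by (simp add: numeral_2_eq_2)
qed

lemma Vn_p_n_exps: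
  assumes S: "S \<subseteq> OffPairs (n - 1)" and k: "k \<in> {1..n}"
  shows "Vn n (p_n_exps n S) k = (if k = n then 2 * ((n - 1) choose 2) else n - 2)"
proof -
  have term_Vn: "Vn n (unit_vec q + unit_vec (n,n)) k = incidence q k + (if k = n then 2 else 0)"
    "Vn n (unit_vec (fst q, n) + unit_vec (snd q, n)) k = incidence q k + (if k = n then 2 else 0)"
    if "q \<in> OffPairs (n - 1)" for q
    using that by (auto simp: Vn_add Vn_single Pairs_def OffPairs_def incidence_def)
  let ?f = "\<lambda>q. incidence q k + (if k = n then 2 else 0)"
  have "Vn n (p_n_exps n S) k = (\<Sum>q\<in>S. Vn n (unit_vec q + unit_vec (n,n)) k)
      + (\<Sum>q\<in>OffPairs (n - 1) - S. Vn n (unit_vec (fst q, n) + unit_vec (snd q, n)) k)"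
    unfolding p_n_exps_def Vn_add[of n "sum _ _"] Vn_sum ..
  also have "\<dots> = (\<Sum>q\<in>S. ?f q) + (\<Sum>q\<in>OffPairs (n - 1) - S. ?f q)"
    by (intro arg_cong2[where f = "(+)"] sum.cong refl term_Vn) (use S in auto)
  also have "\<dots> = (\<Sum>q\<in>OffPairs (n - 1). ?f q)"
    using sum.subset_diff[OF S finite_OffPairs, of ?f] by simp
  also have "\<dots> = (\<Sum>q\<in>OffPairs (n - 1). incidence q k) + (if k = n then 2 * ((n - 1) choose 2) else 0)"
    by (simp add: sum.distrib card_OffPairs)
  also have "(\<Sum>q\<in>OffPairs (n - 1). incidence q k) = (if k = n then 0 else n - 2)"
    using k sum_incidence_OffPairs[of k "n - 1"]
    by (auto simp: incidence_def OffPairs_def intro!: sum.neutral)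
  finally show ?thesis
    by simp
qed

lemma lookup_p_n_exps:
  assumes S: "S \<subseteq> OffPairs (n - 1)" and q: "q \<in> OffPairs (n - 1)"
  shows "lookup (p_n_exps n S) q = (if q \<in> S then 1 else 0)"
proof -
  have fin: "finite S"
    using S finite_OffPairs finite_subset by blast
  have "lookup (p_n_exps n S) q = (\<Sum>p\<in>S. lookup (unit_vec p) q)"
    unfolding p_n_exps_def lookup_add lookup_sum
    using S q by (auto simp: lookup_single when_def OffPairs_def intro!: sum.neutral)
  then show ?thesis
    using fin by (simp add: lookup_indicator_vec[symmetric] indicator_vec_def lookup_sum)
qed

lemma xvar_power_mult_class_sum_eqJ:
  fixes c :: expvec and b :: "nat \<Rightarrow> nat"
  assumes n: "1 \<le> n"
    and c: "keys c \<subseteq> Pairs n" "\<forall>q\<in>OffPairs (n - 1). lookup c q = 0"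
    and b_low: "\<forall>k\<in>{1..n-1}. b k = n - 2 + Vn n c k"
    and b_n: "b n + 2 * s = 2 * ((n - 1) choose 2) + Vn n c n" "n - 2 \<le> b n"
    and par: "even (\<Sum>i\<in>{1..n-1}. b i) \<longleftrightarrow> even (b n)"
  shows "eqJ n (xvar n n ^ s * class_sum n b) (xmon c * p_n n :: 'k::comm_ring_1 mpoly)"
proof -
  let ?e = "Poly_Mapping.single (n,n) s"
  have nn: "(n,n) \<in> Pairs n"
    using n by (simp add: Pairs_def)
  have "eqJ n (xmon ?e * class_sum n b)
      (\<Sum>S\<in>Pow (OffPairs (n - 1)). xmon (c + p_n_exps n S) :: 'k mpoly)"
  proof (rule xmon_mult_class_sum_eqJ)
    show "keys ?e \<subseteq> Pairs n"
      using nn by simp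
    show "\<forall>q\<in>OffPairs (n - 1). lookup ?e q = 0"
      by (auto simp: lookup_single when_def OffPairs_def)
    show "keys (c + p_n_exps n S) \<subseteq> Pairs n" if "S \<subseteq> OffPairs (n - 1)" for S
      using keys_add[of c] c(1) keys_p_n_exps[OF that] by blast
    show "Vn n (c + p_n_exps n S) k = b k + Vn n ?e k"
      if "S \<subseteq> OffPairs (n - 1)" "k \<in> {1..n}" for S k
      using that b_low b_n(1) by (auto simp: Vn_add Vn_p_n_exps Vn_single[OF nn] incidence_def)
    show "odd (lookup (c + p_n_exps n S) q) \<longleftrightarrow> q \<in> S"
      if "S \<subseteq> OffPairs (n - 1)" "q \<in> OffPairs (n - 1)" for S q
      using that c(2) by (simp add: lookup_add lookup_p_n_exps)
    show "\<exists>u\<in>fiber n b. \<forall>q\<in>OffPairs (n - 1). odd (lookup u q) \<longleftrightarrow> q \<in> S"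
      if "S \<subseteq> OffPairs (n - 1)" for S
      using that b_low b_n(2) par by (intro fiber_realizes_parity_pattern) auto
  qed
  then show ?thesis
    by (simp add: xvar_power p_n_eq_sum_xmon sum_distrib_left xmon_add)
qed

lemma sigma_add_half: "sigma m + m div 2 = m choose 2"
proof -
  have "m div 2 \<le> m * (m - 1) div 2"
    by (cases "m < 2") (auto intro: div_le_mono)
  then show ?thesis
    by (simp add: sigma_def choose_two)
qed

lemma xvar_power_p_plus_even_eqJ:
  assumes "even n" "2 \<le> n"
  shows "eqJ n (xvar n n ^ sigma (n - 1) * p_plus_even n) (p_n n :: 'k::comm_ring_1 mpoly)"
proof -
  have "eqJ n (xvar n n ^ sigma (n - 1) * class_sum n (\<lambda>_. n - 2)) (xmon 0 * p_n n :: 'k mpoly)"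
  proof (rule xvar_power_mult_class_sum_eqJ)
    show "n - 2 + 2 * sigma (n - 1) = 2 * ((n - 1) choose 2) + Vn n 0 n"
      using assms sigma_add_half[of "n - 1"] by (simp add: Vn_0) presburger
    show "even (\<Sum>i\<in>{1..n-1}. n - 2) \<longleftrightarrow> even (n - 2)"
      using assms by simp
  qed (use assms in \<open>auto simp: Vn_0\<close>)
  then show ?thesis
    by (simp add: p_plus_even_def xmon_0)
qed

lemma xvar_power_p_plus_odd_eqJ:
  assumes "odd n" "2 \<le> n" "i \<in> {1..n}"
  shows "eqJ n (xvar n n ^ (sigma (n - 1) + 1) * p_plus_odd n i) (xvar i n * p_n n :: 'k::comm_ring_1 mpoly)"
proof -
  let ?b = "\<lambda>k. n - 2 + (if k = i then 1 else 0)"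
  have i_n: "(i,n) \<in> Pairs n"
    using assms by (simp add: Pairs_def)
  have Vn_c: "Vn n (unit_vec (i,n)) k = (if k = i then 1 else 0) + (if k = n then 1 else 0)" for k
    by (simp add: Vn_single[OF i_n] incidence_def)
  have "eqJ n (xvar n n ^ (sigma (n - 1) + 1) * class_sum n ?b) (xmon (unit_vec (i,n)) * p_n n :: 'k mpoly)"
  proof (rule xvar_power_mult_class_sum_eqJ)
    show "\<forall>q\<in>OffPairs (n - 1). lookup (unit_vec (i,n)) q = 0"
      by (auto simp: lookup_single when_def OffPairs_def)
    show "\<forall>k\<in>{1..n-1}. ?b k = n - 2 + Vn n (unit_vec (i,n)) k"
      unfolding Vn_c by auto
    show "?b n + 2 * (sigma (n - 1) + 1) = 2 * ((n - 1) choose 2) + Vn n (unit_vec (i,n)) n"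
      unfolding Vn_c using assms sigma_add_half[of "n - 1"] by (cases "i = n"; simp; presburger)
    have "(\<Sum>k\<in>{1..n-1}. ?b k) = (n - 1) * (n - 2) + (\<Sum>k\<in>{1..n-1}. if k = i then 1 else 0)"
      by (subst sum.distrib) simp
    also have "\<dots> = (n - 1) * (n - 2) + (if i < n then 1 else 0)"
      using assms by (auto simp: sum.delta)
    finally show "even (\<Sum>k\<in>{1..n-1}. ?b k) \<longleftrightarrow> even (?b n)"
      using assms by auto
  qed (use assms i_n in auto)
  then show ?thesis
    using assms by (simp add: p_plus_odd_def xvar_eq_xmon)
qed

theorem lemma2p17:
  fixes n :: nat
  assumes "n \<ge> 2"
  shows "(even n \<longrightarrow>
            eqJ n (xvar n n ^ sigma (n - 1) * (p_plus_even n :: 'k::field mpoly)) (p_n n))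
       \<and> (odd n \<longrightarrow> (\<forall>i\<in>{1..n}.
            eqJ n (xvar n n ^ (sigma (n - 1) + 1) * (p_plus_odd n i :: 'k::field mpoly))
                  (xvar i n * p_n n)))"
  using assms xvar_power_p_plus_even_eqJ xvar_power_p_plus_odd_eqJ by blast

end
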